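(* Let $G$ be a group acting geometrically (i.e.\ properly and cocompactly by isometries) on two CAT(0) spaces $X$ and $X'$. For $g\in G$, let $\mathcal{F}_g\subset\partial X$ and $\mathcal{F}'_g\subset\partial X'$ be the fixed-point sets of $g$ in $\partial X$ and $\partial X'$ respectively. Then $\mathcal{F}_g\neq\emptyset$ if and only if $\mathcal{F}'_g\neq\emptyset$.
   Context: $\partial X$ denotes the visual boundary of the (necessarily proper) CAT(0) space $X$: asymptotic classes of geodesic rays with the cone topology. An isometry $g$ acts on $\partial X$ by $g(\xi(\infty))=(g\circ\xi)(\infty)$, and the fixed-point set is $\mathcal{F}_g=\{\alpha\in\partial X\mid g\alpha=\alpha\}$. *)

theory Defs
  imports "HOL-Analysis.Analysis" "HOL-Algebra.Group_Action"
begin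

definition geodesic_segment :: "(real \<Rightarrow> 'a::metric_space) \<Rightarrow> 'a \<Rightarrow> 'a \<Rightarrow> bool" where
  "geodesic_segment c x y \<longleftrightarrow> c 0 = x \<and> c (dist x y) = y \<and>
     (\<forall>s t. 0 \<le> s \<and> s \<le> dist x y \<and> 0 \<le> t \<and> t \<le> dist x y
        \<longrightarrow> dist (c s) (c t) = \<bar>s - t\<bar>)"

definition geodesic_space :: "'a::metric_space itself \<Rightarrow> bool" where
  "geodesic_space _ \<longleftrightarrow> (\<forall>x y::'a. \<exists>c. geodesic_segment c x y)"

definition proper_metric_space :: "'a::metric_space itself \<Rightarrow> bool" where
  "proper_metric_space _ \<longleftrightarrow> (\<forall>(x::'a) r. compact (cball x r))"

text \<open>Pairs (point on the side c from a to b, its comparison point on the Euclidean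
  segment [a',b'] in the plane), where L = d(a,b).\<close>
definition side_pairs :: "(real \<Rightarrow> 'a::metric_space) \<Rightarrow> real \<Rightarrow> complex \<Rightarrow> complex \<Rightarrow> ('a \<times> complex) set" where
  "side_pairs c L a' b' = {(c t, a' + (t / L) *\<^sub>R (b' - a')) | t. 0 \<le> t \<and> t \<le> L}"

text \<open>CAT(0) inequality for the geodesic triangle with sides c1 (x to y), c2 (y to z),
  c3 (z to x): for every comparison triangle in the Euclidean plane (here: \<complex>)
  distances between points of the triangle are at most the distances of their
  comparison points.\<close>
definition CAT0_triangle_ineq ::
  "'a::metric_space \<Rightarrow> 'a \<Rightarrow> 'a \<Rightarrow> (real \<Rightarrow> 'a) \<Rightarrow> (real \<Rightarrow> 'a) \<Rightarrow> (real \<Rightarrow> 'a) \<Rightarrow> bool" where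
  "CAT0_triangle_ineq x y z c1 c2 c3 \<longleftrightarrow>
    (\<forall>x' y' z' :: complex.
       dist x' y' = dist x y \<and> dist y' z' = dist y z \<and> dist z' x' = dist z x \<longrightarrow>
       (let T = side_pairs c1 (dist x y) x' y' \<union> side_pairs c2 (dist y z) y' z'
                \<union> side_pairs c3 (dist z x) z' x'
        in \<forall>p p' q q'. (p, p') \<in> T \<and> (q, q') \<in> T \<longrightarrow> dist p q \<le> dist p' q'))"

definition CAT0_space :: "'a::metric_space itself \<Rightarrow> bool" where
  "CAT0_space T \<longleftrightarrow> geodesic_space T \<and>
     (\<forall>(x::'a) y z c1 c2 c3. geodesic_segment c1 x y \<and> geodesic_segment c2 y z \<and>
        geodesic_segment c3 z x \<longrightarrow> CAT0_triangle_ineq x y z c1 c2 c3)"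

definition geodesic_rays :: "(real \<Rightarrow> 'a::metric_space) set" where
  "geodesic_rays = {r. \<forall>s t. 0 \<le> s \<and> 0 \<le> t \<longrightarrow> dist (r s) (r t) = \<bar>s - t\<bar>}"

definition asymptotic :: "((real \<Rightarrow> 'a::metric_space) \<times> (real \<Rightarrow> 'a)) set" where
  "asymptotic = {(r, r'). r \<in> geodesic_rays \<and> r' \<in> geodesic_rays \<and>
       (\<exists>C. \<forall>t\<ge>0. dist (r t) (r' t) \<le> C)}"

definition visual_boundary :: "(real \<Rightarrow> 'a::metric_space) set set" where
  "visual_boundary = geodesic_rays // asymptotic"

text \<open>Induced action of a map on boundary classes: g(xi(\<infinity>)) = (g \<circ> xi)(\<infinity>).\<close>
definition bd_act :: "('a::metric_space \<Rightarrow> 'a) \<Rightarrow> (real \<Rightarrow> 'a) set \<Rightarrow> (real \<Rightarrow> 'a) set" where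
  "bd_act f \<alpha> = (\<Union>r\<in>\<alpha>. asymptotic `` {f \<circ> r})"

definition bd_fixed_points :: "('a::metric_space \<Rightarrow> 'a) \<Rightarrow> (real \<Rightarrow> 'a) set set" where
  "bd_fixed_points f = {\<alpha> \<in> visual_boundary. bd_act f \<alpha> = \<alpha>}"

definition isometry :: "('a::metric_space \<Rightarrow> 'a) \<Rightarrow> bool" where
  "isometry f \<longleftrightarrow> surj f \<and> (\<forall>x y. dist (f x) (f y) = dist x y)"

text \<open>Proper (properly discontinuous) action, Bridson--Haefliger I.8.2.\<close>
definition proper_action :: "('g, 'c) monoid_scheme \<Rightarrow> ('g \<Rightarrow> 'a::metric_space \<Rightarrow> 'a) \<Rightarrow> bool" where
  "proper_action G \<phi> \<longleftrightarrow> (\<forall>x. \<exists>r>0.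
      finite {g \<in> carrier G. \<phi> g ` ball x r \<inter> ball x r \<noteq> {}})"

definition cocompact_action :: "('g, 'c) monoid_scheme \<Rightarrow> ('g \<Rightarrow> 'a::metric_space \<Rightarrow> 'a) \<Rightarrow> bool" where
  "cocompact_action G \<phi> \<longleftrightarrow> (\<exists>K. compact K \<and> (\<Union>g\<in>carrier G. \<phi> g ` K) = UNIV)"

definition geometric_action :: "('g, 'c) monoid_scheme \<Rightarrow> ('g \<Rightarrow> 'a::metric_space \<Rightarrow> 'a) \<Rightarrow> bool" where
  "geometric_action G \<phi> \<longleftrightarrow> group_action G UNIV \<phi> \<and>
     (\<forall>g\<in>carrier G. isometry (\<phi> g)) \<and> proper_action G \<phi> \<and> cocompact_action G \<phi>"

end

theory Submission
  imports Defs
begin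

text \<open>Both conditions are equivalent to the centralizer of \<open>g\<close> in \<open>G\<close> being infinite, a
  condition that does not mention the space.

  If \<open>g\<close> fixes a boundary point, a ray \<open>r\<close> towards it is moved a bounded amount by \<open>g\<close>.
  Cocompactness writes \<open>r(n) = h\<^sub>n q\<^sub>n\<close> with \<open>q\<^sub>n\<close> in a compact set, so the conjugates
  \<open>h\<^sub>n\<^sup>-\<^sup>1 g h\<^sub>n\<close> move a base point a bounded amount and, the action being proper, take only
  finitely many values, while the \<open>h\<^sub>n\<close> are infinitely many.  Elements giving the same
  conjugate differ by an element of the centralizer.

  Conversely, infinitely many elements \<open>h\<close> of the centralizer move a base point \<open>x\<close>
  arbitrarily far, and \<open>g\<close> moves each \<open>h x\<close> exactly as much as \<open>x\<close>.  In a CAT(0) space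
  the displacement of an isometry is convex along geodesics, so the geodesics from \<open>x\<close> to
  the points \<open>h x\<close> are moved by at most \<open>d(x, g x)\<close>; by compactness they accumulate at a
  ray moved a bounded amount by \<open>g\<close>, whose endpoint is therefore fixed.\<close>

section \<open>Geodesics in CAT(0) spaces\<close>

lemma plane_triangle_exists:
  fixes a b e :: real
  assumes "a \<ge> 0" "b \<ge> 0" "e \<ge> 0" "b \<le> a + e" "a \<le> b + e" "e \<le> a + b"
  shows "\<exists>x' y' z' :: complex. dist x' y' = a \<and> dist y' z' = b \<and> dist z' x' = e"
proof (cases "a = 0")
  case True
  then have "b = e" using assms by auto
  then show ?thesis using True
    by (intro exI[of _ 0] exI[of _ "complex_of_real e"]) (auto simp: dist_norm assms)
next
  case False
  then have a: "a > 0" using assms by auto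
  define u where "u = (a\<^sup>2 + e\<^sup>2 - b\<^sup>2) / (2*a)"
  have "(a - e)\<^sup>2 \<le> b\<^sup>2" "b\<^sup>2 \<le> (a + e)\<^sup>2"
    using assms by (auto intro!: power_mono simp: abs_le_square_iff[symmetric])
  then have "\<bar>u\<bar> \<le> e" using a unfolding u_def
    by (auto simp: abs_le_iff divide_le_eq le_divide_eq power2_eq_square algebra_simps)
  then have ue: "u\<^sup>2 \<le> e\<^sup>2" by (metis abs_le_square_iff abs_of_nonneg assms(3))
  define v where "v = sqrt (e\<^sup>2 - u\<^sup>2)"
  have v2: "v\<^sup>2 = e\<^sup>2 - u\<^sup>2" using ue unfolding v_def by simp
  have au: "2*a*u = a\<^sup>2 + e\<^sup>2 - b\<^sup>2" using a unfolding u_def by simp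
  have "(cmod (complex_of_real a - Complex u v))\<^sup>2 = (a - u)\<^sup>2 + v\<^sup>2"
    by (simp add: cmod_def complex_of_real_def)
  also have "\<dots> = b\<^sup>2" using v2 au by (simp add: power2_eq_square algebra_simps)
  finally have "(cmod (complex_of_real a - Complex u v))\<^sup>2 = b\<^sup>2" .
  then have "dist (complex_of_real a) (Complex u v) = b" by (simp add: dist_norm assms(2))
  moreover have "(cmod (Complex u v))\<^sup>2 = e\<^sup>2" using v2 by (simp add: cmod_def)
  then have "dist (Complex u v) 0 = e" by (simp add: dist_norm assms(3))
  moreover have "dist 0 (complex_of_real a) = a" using a by (simp add: dist_norm)
  ultimately show ?thesis by blast
qed

lemma geodesic_segment_reverse:
  "geodesic_segment c x y \<Longrightarrow> geodesic_segment (\<lambda>u. c (dist x y - u)) y x"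
  unfolding geodesic_segment_def by (auto simp: dist_commute)

lemma geodesic_segment_dist_start:
  assumes "geodesic_segment c x y" "0 \<le> t" "t \<le> dist x y"
  shows "dist x (c t) = t"
  using assms unfolding geodesic_segment_def
  by (metis abs_of_nonneg diff_0 abs_minus_cancel order_refl zero_le_dist)

lemma geodesic_segment_isometry_image:
  "isometry f \<Longrightarrow> geodesic_segment c x y \<Longrightarrow> geodesic_segment (f \<circ> c) (f x) (f y)"
  unfolding isometry_def geodesic_segment_def by auto

lemma CAT0_dist_common_start:
  fixes c c' :: "real \<Rightarrow> 'a::metric_space"
  assumes cat: "CAT0_space TYPE('a)" and c: "geodesic_segment c p a"
    and c': "geodesic_segment c' p b" and s: "0 \<le> s" "s \<le> 1"
  shows "dist (c (s * dist p a)) (c' (s * dist p b)) \<le> s * dist a b"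
proof -
  from cat obtain c2 where c2: "geodesic_segment c2 a b"
    unfolding CAT0_space_def geodesic_space_def by blast
  define c3 where "c3 = (\<lambda>u. c' (dist p b - u))"
  have "geodesic_segment c3 b p" using geodesic_segment_reverse[OF c'] unfolding c3_def .
  then have tri: "CAT0_triangle_ineq p a b c c2 c3" using cat c c2 unfolding CAT0_space_def by blast
  obtain p' a' b' :: complex
    where d: "dist p' a' = dist p a" "dist a' b' = dist a b" "dist b' p' = dist b p"
    using plane_triangle_exists[of "dist p a" "dist a b" "dist b p"]
    by (metis dist_commute dist_triangle zero_le_dist)
  define P where "P = p' + s *\<^sub>R (a' - p')"
  define Q where "Q = p' + s *\<^sub>R (b' - p')"
  have "(c (s * dist p a), P) \<in> side_pairs c (dist p a) p' a'"
  proof (cases "dist p a = 0")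
    case True
    then show ?thesis using d unfolding side_pairs_def P_def by (auto intro!: exI[of _ 0])
  next
    case False
    then show ?thesis unfolding side_pairs_def P_def using s
      by (auto intro!: exI[of _ "s * dist p a"] simp: mult_le_cancel_right1)
  qed
  moreover have "(c' (s * dist p b), Q) \<in> side_pairs c3 (dist b p) b' p'"
  proof (cases "dist p b = 0")
    case True
    then show ?thesis using d unfolding side_pairs_def Q_def c3_def
      by (auto simp: dist_commute intro!: exI[of _ 0])
  next
    case False
    have "c3 ((1 - s) * dist b p) = c' (s * dist p b)"
      unfolding c3_def by (simp add: dist_commute algebra_simps)
    moreover have "(1 - s) * dist b p / dist b p = 1 - s" using False by (simp add: dist_commute)
    then have "b' + ((1 - s) * dist b p / dist b p) *\<^sub>R (p' - b') = Q"
      unfolding Q_def by (simp only:) (simp add: algebra_simps)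
    moreover have "0 \<le> (1 - s) * dist b p" "(1 - s) * dist b p \<le> dist b p"
      using s by (simp_all add: mult_left_le_one_le)
    ultimately show ?thesis unfolding side_pairs_def
      by (intro CollectI exI[of _ "(1 - s) * dist b p"]) simp
  qed
  ultimately have "dist (c (s * dist p a)) (c' (s * dist p b)) \<le> dist P Q"
    using tri d unfolding CAT0_triangle_ineq_def Let_def by blast
  also have "dist P Q = s * dist a b"
  proof -
    have "P - Q = s *\<^sub>R (a' - b')" unfolding P_def Q_def by (simp add: algebra_simps)
    then show ?thesis using s d by (simp add: dist_norm)
  qed
  finally show ?thesis .
qed

lemma CAT0_dist_geodesics_le:
  fixes \<sigma> \<sigma>' :: "real \<Rightarrow> 'a::metric_space"
  assumes cat: "CAT0_space TYPE('a)" and \<sigma>: "geodesic_segment \<sigma> x y"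
    and \<sigma>': "geodesic_segment \<sigma>' x' y'" and L: "dist x' y' = dist x y"
    and t: "0 \<le> t" "t \<le> dist x y" and C: "dist x x' \<le> C" "dist y y' \<le> C"
  shows "dist (\<sigma> t) (\<sigma>' t) \<le> C"
proof (cases "dist x y = 0")
  case True
  then show ?thesis using t \<sigma> \<sigma>' C unfolding geodesic_segment_def by simp
next
  case False
  define s where "s = t / dist x y"
  have s: "0 \<le> s" "s \<le> 1" "t = s * dist x y" using t False unfolding s_def by auto
  \<comment> \<open>compare both geodesics with the diagonal \<open>\<tau>\<close> from \<open>x\<close> to \<open>y'\<close>\<close>
  from cat obtain \<tau> where \<tau>: "geodesic_segment \<tau> x y'"
    unfolding CAT0_space_def geodesic_space_def by blast
  have "dist (\<sigma> t) (\<tau> (s * dist x y')) \<le> s * dist y y'"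
    using CAT0_dist_common_start[OF cat \<sigma> \<tau> s(1,2)] s(3) by simp
  moreover have "dist (\<tau> (s * dist x y')) (\<sigma>' t) \<le> (1 - s) * dist x x'"
    using CAT0_dist_common_start[OF cat geodesic_segment_reverse[OF \<tau>]
        geodesic_segment_reverse[OF \<sigma>'], of "1 - s"] s L
    by (simp add: dist_commute algebra_simps)
  moreover have "s * dist y y' + (1 - s) * dist x x' \<le> s * C + (1 - s) * C"
    using s C by (intro add_mono mult_left_mono) auto
  ultimately show ?thesis
    using dist_triangle[of "\<sigma> t" "\<sigma>' t" "\<tau> (s * dist x y')"] by (simp add: algebra_simps)
qed

lemma CAT0_displacement_le_on_geodesic:
  fixes g :: "'a::metric_space \<Rightarrow> 'a"
  assumes cat: "CAT0_space TYPE('a)" and g: "isometry g" and \<sigma>: "geodesic_segment \<sigma> x y"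
    and "dist x (g x) \<le> c" "dist y (g y) \<le> c" and "0 \<le> t" "t \<le> dist x y"
  shows "dist (\<sigma> t) (g (\<sigma> t)) \<le> c"
proof -
  have "dist (g x) (g y) = dist x y" using g unfolding isometry_def by simp
  from CAT0_dist_geodesics_le[OF cat \<sigma> geodesic_segment_isometry_image[OF g \<sigma>] this] assms
  show ?thesis by simp
qed

lemma CAT0_segment_of_bounded_displacement:
  fixes g :: "'a::metric_space \<Rightarrow> 'a"
  assumes cat: "CAT0_space TYPE('a)" and g: "isometry g"
    and x0: "dist x0 (g x0) \<le> c" and y: "dist y (g y) \<le> c"
  shows "\<exists>f. (\<forall>t. f t \<in> cball x0 \<bar>t\<bar>) \<and> (\<forall>t. dist (f t) (g (f t)) \<le> c) \<and>
    (\<forall>s t. 0 \<le> s \<and> s \<le> dist x0 y \<and> 0 \<le> t \<and> t \<le> dist x0 y \<longrightarrow> dist (f s) (f t) = \<bar>s - t\<bar>)"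
proof -
  from cat obtain \<sigma> where \<sigma>: "geodesic_segment \<sigma> x0 y"
    unfolding CAT0_space_def geodesic_space_def by blast
  define f where "f t = (if t < 0 then x0 else \<sigma> (min t (dist x0 y)))" for t
  have "f t \<in> cball x0 \<bar>t\<bar>" for t
    unfolding f_def using geodesic_segment_dist_start[OF \<sigma>] by auto
  moreover have "dist (f t) (g (f t)) \<le> c" for t
    using CAT0_displacement_le_on_geodesic[OF cat g \<sigma> x0 y] x0 unfolding f_def by simp
  moreover have "dist (f s) (f t) = \<bar>s - t\<bar>"
    if "0 \<le> s" "s \<le> dist x0 y" "0 \<le> t" "t \<le> dist x0 y" for s t
    using that \<sigma> unfolding f_def geodesic_segment_def by auto
  ultimately show ?thesis by blast
qed

section \<open>Rays of bounded displacement\<close>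

lemma compact_Int_decseq_closed_nonempty:
  fixes A :: "nat \<Rightarrow> 'a::topological_space set"
  assumes "compact U" "\<And>n. closed (A n)" "decseq A" "\<And>n. U \<inter> A n \<noteq> {}"
  shows "U \<inter> (\<Inter>n. A n) \<noteq> {}"
proof (rule compact_imp_fip_image[OF assms(1,2)])
  fix I :: "nat set" assume "finite I"
  then have "A (Max (insert 0 I)) \<subseteq> A i" if "i \<in> I" for i
    using that by (intro decseqD[OF \<open>decseq A\<close>]) simp
  then have "A (Max (insert 0 I)) \<subseteq> (\<Inter>i\<in>I. A i)" by blast
  then show "U \<inter> (\<Inter>i\<in>I. A i) \<noteq> {}" using assms(4) by blast
qed

text \<open>The ray is found among the functions \<open>F\<close> with \<open>F t \<in> cball x\<^sub>0 \<bar>t\<bar>\<close>, a compact set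
  in the product topology by Tychonoff's theorem; being a geodesic on \<open>[0, n]\<close> and having
  displacement at most \<open>c\<close> are closed conditions.\<close>

lemma CAT0_ray_of_bounded_displacement:
  fixes g :: "'a::metric_space \<Rightarrow> 'a"
  assumes cat: "CAT0_space TYPE('a)" and pr: "proper_metric_space TYPE('a)"
    and g: "isometry g" and c0: "dist x0 (g x0) \<le> c"
    and far: "\<And>n::nat. \<exists>y. real n \<le> dist x0 y \<and> dist y (g y) \<le> c"
  shows "\<exists>r \<in> geodesic_rays. \<forall>t. dist (r t) (g (r t)) \<le> c"
proof -
  define U :: "(real \<Rightarrow> 'a) set" where "U = PiE UNIV (\<lambda>t. cball x0 \<bar>t\<bar>)"
  have "compactin (product_topology (\<lambda>_. euclidean) UNIV) U"
    unfolding U_def compactin_PiE using pr unfolding proper_metric_space_def by simp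
  then have "compact U" by (simp add: euclidean_product_topology)
  define A :: "nat \<Rightarrow> (real \<Rightarrow> 'a) set" where
    "A n = (\<Inter>s\<in>{0..real n}. \<Inter>t\<in>{0..real n}. {F. dist (F s) (F t) = \<bar>s - t\<bar>})
           \<inter> (\<Inter>t. {F. dist (F t) (g (F t)) \<le> c})" for n
  have "continuous_on UNIV g"
    using g unfolding continuous_on_iff isometry_def by metis
  then have contg: "continuous_on UNIV (\<lambda>F::real \<Rightarrow> 'a. g (F t))" for t
    by (rule continuous_on_compose2[OF _ continuous_on_product_coordinates]) auto
  have "closed {F::real \<Rightarrow> 'a. dist (F s) (F t) = \<bar>s - t\<bar>}" for s t
    by (intro closed_Collect_eq continuous_on_dist continuous_on_product_coordinates
        continuous_on_const)
  moreover have "closed {F::real \<Rightarrow> 'a. dist (F t) (g (F t)) \<le> c}" for t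
    by (intro closed_Collect_le continuous_on_dist continuous_on_product_coordinates contg
        continuous_on_const)
  ultimately have "closed (A n)" for n
    unfolding A_def by (intro closed_Int closed_INT ballI) auto
  moreover have "decseq A"
    unfolding decseq_def A_def by auto
  moreover have "U \<inter> A n \<noteq> {}" for n
  proof -
    obtain y where y: "real n \<le> dist x0 y" "dist y (g y) \<le> c" using far by blast
    obtain f where "\<forall>t. f t \<in> cball x0 \<bar>t\<bar>" "\<forall>t. dist (f t) (g (f t)) \<le> c"
      "\<forall>s t. 0 \<le> s \<and> s \<le> dist x0 y \<and> 0 \<le> t \<and> t \<le> dist x0 y \<longrightarrow> dist (f s) (f t) = \<bar>s - t\<bar>"
      using CAT0_segment_of_bounded_displacement[OF cat g c0 y(2)] by blast
    then have "f \<in> U \<inter> A n" using y(1) unfolding U_def A_def by (auto simp: PiE_iff)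
    then show ?thesis by blast
  qed
  ultimately have "U \<inter> (\<Inter>n. A n) \<noteq> {}"
    by (rule compact_Int_decseq_closed_nonempty[OF \<open>compact U\<close>])
  then obtain r where r: "\<And>n. r \<in> A n" by blast
  have "r \<in> geodesic_rays" unfolding geodesic_rays_def
  proof (intro CollectI allI impI)
    fix s t :: real assume "0 \<le> s \<and> 0 \<le> t"
    moreover have "s \<le> real (nat \<lceil>max s t\<rceil>)" "t \<le> real (nat \<lceil>max s t\<rceil>)" by linarith+
    ultimately show "dist (r s) (r t) = \<bar>s - t\<bar>" using r[of "nat \<lceil>max s t\<rceil>"] unfolding A_def by auto
  qed
  moreover have "\<forall>t. dist (r t) (g (r t)) \<le> c" using r[of 0] unfolding A_def by auto
  ultimately show ?thesis by blast
qed

section \<open>Fixed points at infinity\<close>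

lemma equiv_asymptotic: "equiv geodesic_rays (asymptotic :: ((real \<Rightarrow> 'a::metric_space) \<times> _) set)"
proof (rule equivI)
  show "asymptotic \<subseteq> geodesic_rays \<times> geodesic_rays" unfolding asymptotic_def by auto
  show "refl_on geodesic_rays (asymptotic :: ((real \<Rightarrow> 'a) \<times> _) set)"
    by (rule refl_onI) (auto simp: asymptotic_def)
  show "sym (asymptotic :: ((real \<Rightarrow> 'a) \<times> _) set)"
    unfolding sym_def asymptotic_def by (auto simp: dist_commute)
  show "trans (asymptotic :: ((real \<Rightarrow> 'a) \<times> _) set)"
    unfolding trans_def asymptotic_def
  proof clarsimp
    fix x y z :: "real \<Rightarrow> 'a" and C1 C2
    assume "\<forall>t\<ge>0. dist (x t) (y t) \<le> C1" "\<forall>t\<ge>0. dist (y t) (z t) \<le> C2"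
    then have "\<forall>t\<ge>0. dist (x t) (z t) \<le> C1 + C2"
      by (smt (verit) dist_triangle)
    then show "\<exists>C. \<forall>t\<ge>0. dist (x t) (z t) \<le> C" ..
  qed
qed

lemma geodesic_rays_isometry_image: "isometry f \<Longrightarrow> r \<in> geodesic_rays \<Longrightarrow> f \<circ> r \<in> geodesic_rays"
  unfolding isometry_def geodesic_rays_def by auto

lemma bd_fixed_points_nonempty_iff:
  assumes f: "isometry f"
  shows "bd_fixed_points f \<noteq> {} \<longleftrightarrow> (\<exists>r\<in>geodesic_rays. \<exists>C. \<forall>t\<ge>0. dist (r t) (f (r t)) \<le> C)"
proof
  assume "bd_fixed_points f \<noteq> {}"
  then obtain \<alpha> where \<alpha>: "\<alpha> \<in> visual_boundary" "bd_act f \<alpha> = \<alpha>"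
    unfolding bd_fixed_points_def by blast
  then obtain r where r: "r \<in> geodesic_rays" "\<alpha> = asymptotic `` {r}"
    unfolding visual_boundary_def by (auto elim: quotientE)
  have "r \<in> \<alpha>" "f \<circ> r \<in> asymptotic `` {f \<circ> r}"
    using r geodesic_rays_isometry_image[OF f r(1)] unfolding asymptotic_def by auto
  then have "f \<circ> r \<in> \<alpha>" using \<alpha>(2) unfolding bd_act_def by blast
  then show "\<exists>r\<in>geodesic_rays. \<exists>C. \<forall>t\<ge>0. dist (r t) (f (r t)) \<le> C"
    using r unfolding asymptotic_def by auto
next
  assume "\<exists>r\<in>geodesic_rays. \<exists>C. \<forall>t\<ge>0. dist (r t) (f (r t)) \<le> C"
  then obtain r where r: "r \<in> geodesic_rays" "(r, f \<circ> r) \<in> asymptotic"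
    using geodesic_rays_isometry_image[OF f] unfolding asymptotic_def by auto
  let ?\<alpha> = "asymptotic `` {r}"
  have "asymptotic `` {f \<circ> r'} = ?\<alpha>" if "r' \<in> ?\<alpha>" for r'
  proof -
    have "(f \<circ> r, f \<circ> r') \<in> asymptotic"
      using that f geodesic_rays_isometry_image[OF f] unfolding asymptotic_def isometry_def by auto
    then have "(r, f \<circ> r') \<in> asymptotic"
      using r(2) equiv_asymptotic unfolding equiv_def trans_def by blast
    then show ?thesis using equiv_class_eq[OF equiv_asymptotic] by metis
  qed
  moreover have "r \<in> ?\<alpha>" using r(1) unfolding asymptotic_def by auto
  ultimately have "bd_act f ?\<alpha> = ?\<alpha>" unfolding bd_act_def by auto
  moreover have "?\<alpha> \<in> visual_boundary" unfolding visual_boundary_def using r(1) by (rule quotientI)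
  ultimately show "bd_fixed_points f \<noteq> {}" unfolding bd_fixed_points_def by blast
qed

section \<open>Centralizers\<close>

definition centralizer :: "('g, 'c) monoid_scheme \<Rightarrow> 'g \<Rightarrow> 'g set" where
  "centralizer G g = {h \<in> carrier G. h \<otimes>\<^bsub>G\<^esub> g = g \<otimes>\<^bsub>G\<^esub> h}"

lemma (in group) infinite_centralizer_if_finitely_many_conjugates:
  assumes g: "g \<in> carrier G" and H: "H \<subseteq> carrier G" "infinite H"
    and fin: "finite ((\<lambda>h. inv h \<otimes> g \<otimes> h) ` H)"
  shows "infinite (centralizer G g)"
proof
  assume fin_cent: "finite (centralizer G g)"
  obtain k where "infinite ((\<lambda>h. inv h \<otimes> g \<otimes> h) -` {k} \<inter> H)" (is "infinite ?H")
    using inf_img_fin_domE'[OF fin H(2)] by blast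
  then obtain m where m: "m \<in> ?H" by (metis finite.emptyI equals0I)
  have "(\<lambda>h. m \<otimes> inv h) ` ?H \<subseteq> centralizer G g"
  proof (rule image_subsetI)
    fix h assume h: "h \<in> ?H"
    have hm: "h \<in> carrier G" "m \<in> carrier G" using h m H(1) by auto
    have "m \<otimes> inv h \<otimes> g = m \<otimes> (inv h \<otimes> g \<otimes> h) \<otimes> inv h"
      using hm g by (simp add: m_assoc)
    also have "inv h \<otimes> g \<otimes> h = inv m \<otimes> g \<otimes> m" using h m by simp
    also have "m \<otimes> (inv m \<otimes> g \<otimes> m) \<otimes> inv h = g \<otimes> (m \<otimes> inv h)"
      using hm g by (simp add: m_assoc[symmetric])
    finally show "m \<otimes> inv h \<in> centralizer G g" using hm g unfolding centralizer_def by simp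
  qed
  moreover have "inj_on (\<lambda>h. m \<otimes> inv h) ?H"
  proof (rule inj_onI)
    fix h h' assume h: "h \<in> ?H" "h' \<in> ?H" and "m \<otimes> inv h = m \<otimes> inv h'"
    moreover have hc: "h \<in> carrier G" "h' \<in> carrier G" "m \<in> carrier G" using h m H(1) by auto
    ultimately have "inv h = inv h'" by simp
    then show "h = h'" using hc by (metis inv_inv)
  qed
  ultimately have "finite ?H" using finite_imageD finite_subset fin_cent by blast
  then show False using \<open>infinite ?H\<close> by contradiction
qed

section \<open>Geometric actions\<close>

lemma isometry_displacement_le:
  assumes "isometry f"
  shows "dist (f x) x \<le> dist (f y) y + 2 * dist x y"
proof -
  have "dist (f x) (f y) = dist x y" using assms unfolding isometry_def by simp
  then show ?thesis using dist_triangle[of "f x" x "f y"] dist_triangle[of "f y" x y]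
    by (simp add: dist_commute)
qed

lemma infinite_range_if_tracks_ray:
  fixes f :: "'h \<Rightarrow> 'a::metric_space"
  assumes r: "r \<in> geodesic_rays" and D: "\<And>n::nat. dist (f (hh n)) (r (real n)) \<le> D"
  shows "infinite (range hh)"
proof
  assume "finite (range hh)"
  then have "bounded ((\<lambda>n. f (hh n)) ` UNIV)"
    by (metis finite_imageI finite_imp_bounded image_image)
  then obtain B where B: "\<And>n. dist (r 0) (f (hh n)) \<le> B"
    unfolding bounded_any_center[of _ "r 0"] by blast
  obtain n :: nat where "B + D < real n"
    using reals_Archimedean2 by blast
  moreover have "real n = dist (r 0) (r (real n))" using r unfolding geodesic_rays_def by simp
  ultimately show False
    using dist_triangle[of "r 0" "r (real n)" "f (hh n)"] B[of n] D[of n] by linarith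
qed

locale geometric_group_action =
  fixes G :: "('g, 'c) monoid_scheme" (structure) and \<phi> :: "'g \<Rightarrow> 'a::metric_space \<Rightarrow> 'a"
  assumes geometric: "geometric_action G \<phi>" and proper_space: "proper_metric_space TYPE('a)"
begin

sublocale group_action G UNIV \<phi>
  using geometric unfolding geometric_action_def by simp

sublocale group G
  using group_hom group_hom.axioms(1) by blast

lemma isometry_action: "h \<in> carrier G \<Longrightarrow> isometry (\<phi> h)"
  using geometric unfolding geometric_action_def by simp

lemma dist_action: "h \<in> carrier G \<Longrightarrow> dist (\<phi> h x) (\<phi> h y) = dist x y"
  using isometry_action unfolding isometry_def by simp

lemma action_mult: "g \<in> carrier G \<Longrightarrow> h \<in> carrier G \<Longrightarrow> \<phi> (g \<otimes> h) x = \<phi> g (\<phi> h x)"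
  by (simp add: composition_rule)

lemma action_inv: "h \<in> carrier G \<Longrightarrow> \<phi> (inv h) (\<phi> h x) = x"
  by (simp add: orbit_sym_aux)

lemma dist_action_conjugate:
  assumes "g \<in> carrier G" "h \<in> carrier G"
  shows "dist (\<phi> (inv h \<otimes> g \<otimes> h) x) x = dist (\<phi> g (\<phi> h x)) (\<phi> h x)"
proof -
  have "dist (\<phi> (inv h \<otimes> g \<otimes> h) x) x = dist (\<phi> (inv h) (\<phi> g (\<phi> h x))) (\<phi> (inv h) (\<phi> h x))"
    using assms by (simp add: action_mult action_inv)
  also have "\<dots> = dist (\<phi> g (\<phi> h x)) (\<phi> h x)" using assms by (simp add: dist_action)
  finally show ?thesis .
qed

lemma finite_bounded_displacement: "finite {h \<in> carrier G. dist (\<phi> h x) x \<le> R}"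
proof (rule ccontr)
  assume inf: "infinite {h \<in> carrier G. dist (\<phi> h x) x \<le> R}" (is "infinite ?S")
  obtain r where r: "r > 0" and fin: "finite {g \<in> carrier G. \<phi> g ` ball x r \<inter> ball x r \<noteq> {}}"
    using geometric unfolding geometric_action_def proper_action_def by blast
  have "compact (cball x R)" using proper_space unfolding proper_metric_space_def by simp
  then obtain D where D: "D \<subseteq> cball x R" "finite D" "cball x R \<subseteq> (\<Union>y\<in>D. ball y (r/2))"
    using compactE_image[of "cball x R" "cball x R" "\<lambda>y. ball y (r/2)"] r by force
  define T where "T y = {h \<in> ?S. dist y (\<phi> h x) < r/2}" for y
  have "?S \<subseteq> (\<Union>y\<in>D. T y)"
  proof
    fix h assume h: "h \<in> ?S"
    then have "\<phi> h x \<in> cball x R" by (simp add: dist_commute)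
    then obtain y where "y \<in> D" "dist y (\<phi> h x) < r/2" using D(3) by auto
    then show "h \<in> (\<Union>y\<in>D. T y)" using h unfolding T_def by blast
  qed
  then obtain y where "infinite (T y)"
    using inf D(2) by (meson finite_UN_I finite_subset)
  then obtain h0 where h0: "h0 \<in> T y" by (metis finite.emptyI equals0I)
  have "(\<lambda>h. inv h0 \<otimes> h) ` T y \<subseteq> {g \<in> carrier G. \<phi> g ` ball x r \<inter> ball x r \<noteq> {}}"
  proof clarify
    fix h assume h: "h \<in> T y"
    have hc: "h0 \<in> carrier G" "h \<in> carrier G" using h h0 unfolding T_def by auto
    then have "dist x (\<phi> (inv h0 \<otimes> h) x) = dist (\<phi> (inv h0) (\<phi> h0 x)) (\<phi> (inv h0) (\<phi> h x))"
      by (simp add: action_mult action_inv)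
    also have "\<dots> = dist (\<phi> h0 x) (\<phi> h x)" using hc by (simp add: dist_action)
    also have "\<dots> < r"
      using dist_triangle_half_l[of "\<phi> h0 x" y r "\<phi> h x"] h h0 unfolding T_def
      by (simp add: dist_commute)
    finally have "\<phi> (inv h0 \<otimes> h) x \<in> \<phi> (inv h0 \<otimes> h) ` ball x r \<inter> ball x r" using r by simp
    then show "inv h0 \<otimes> h \<in> carrier G \<and> \<phi> (inv h0 \<otimes> h) ` ball x r \<inter> ball x r \<noteq> {}"
      using hc by blast
  qed
  moreover have "inj_on (\<lambda>h. inv h0 \<otimes> h) (T y)"
    using h0 unfolding T_def by (auto intro!: inj_onI)
  ultimately have "finite (T y)" using finite_imageD finite_subset fin by blast
  then show False using \<open>infinite (T y)\<close> by contradiction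
qed

lemma bd_fixed_points_if_infinite_centralizer:
  assumes cat: "CAT0_space TYPE('a)" and g: "g \<in> carrier G" and inf: "infinite (centralizer G g)"
  shows "bd_fixed_points (\<phi> g) \<noteq> {}"
proof -
  define x0 :: 'a where "x0 = undefined"
  have "\<exists>y. real n \<le> dist x0 y \<and> dist y (\<phi> g y) \<le> dist x0 (\<phi> g x0)" for n :: nat
  proof -
    have "\<not> centralizer G g \<subseteq> {h \<in> carrier G. dist (\<phi> h x0) x0 \<le> real n}"
      using inf finite_bounded_displacement finite_subset by blast
    then obtain h where h: "h \<in> carrier G" "h \<otimes> g = g \<otimes> h" "\<not> dist (\<phi> h x0) x0 \<le> real n"
      unfolding centralizer_def by blast
    have "inv h \<otimes> g \<otimes> h = inv h \<otimes> (h \<otimes> g)" using g h(1,2) by (simp add: m_assoc)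
    also have "\<dots> = g" using g h(1) by (simp add: m_assoc[symmetric])
    finally have "dist (\<phi> g (\<phi> h x0)) (\<phi> h x0) = dist (\<phi> g x0) x0"
      using dist_action_conjugate[OF g h(1), of x0] by simp
    then show ?thesis using h(3) by (intro exI[of _ "\<phi> h x0"]) (simp add: dist_commute)
  qed
  then obtain r where "r \<in> geodesic_rays" "\<forall>t. dist (r t) (\<phi> g (r t)) \<le> dist x0 (\<phi> g x0)"
    using CAT0_ray_of_bounded_displacement[OF cat proper_space isometry_action[OF g]] by blast
  then show ?thesis using bd_fixed_points_nonempty_iff[OF isometry_action[OF g]] by blast
qed

lemma infinite_centralizer_if_bd_fixed_points:
  assumes g: "g \<in> carrier G" and "bd_fixed_points (\<phi> g) \<noteq> {}"
  shows "infinite (centralizer G g)"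
proof -
  obtain r C where r: "r \<in> geodesic_rays" and C: "\<forall>t\<ge>0. dist (r t) (\<phi> g (r t)) \<le> C"
    using assms bd_fixed_points_nonempty_iff[OF isometry_action[OF g]] by blast
  obtain K where K: "compact K" "(\<Union>h\<in>carrier G. \<phi> h ` K) = UNIV"
    using geometric unfolding geometric_action_def cocompact_action_def by blast
  obtain x0 D where D: "K \<subseteq> cball x0 D"
    using compact_imp_bounded[OF K(1)] unfolding bounded_subset_cball by blast
  have "r (real n) \<in> (\<Union>h\<in>carrier G. \<phi> h ` K)" for n :: nat
    using K(2) by simp
  then have "\<exists>h\<in>carrier G. \<exists>q\<in>K. r (real n) = \<phi> h q" for n :: nat
    by blast
  then obtain hh qq where hq: "\<And>n::nat. hh n \<in> carrier G" "\<And>n. qq n \<in> K"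
    "\<And>n. r (real n) = \<phi> (hh n) (qq n)" by metis
  have qq_near: "dist x0 (qq n) \<le> D" for n using D hq(2)[of n] by (auto simp: subset_iff)
  have "dist (\<phi> (hh n) x0) (r (real n)) \<le> D" for n
    using hq(3)[of n] dist_action[OF hq(1)[of n], of x0 "qq n"] qq_near[of n] by simp
  then have "infinite (range hh)"
    by (rule infinite_range_if_tracks_ray[OF r, where f = "\<lambda>h. \<phi> h x0"])
  moreover have "(\<lambda>h. inv h \<otimes> g \<otimes> h) ` range hh \<subseteq> {k \<in> carrier G. dist (\<phi> k x0) x0 \<le> C + 2 * D}"
  proof clarsimp
    fix n
    let ?k = "inv (hh n) \<otimes> g \<otimes> hh n"
    have "dist (\<phi> ?k (qq n)) (qq n) = dist (\<phi> g (r n)) (r n)"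
      using dist_action_conjugate[OF g hq(1)] hq(3) by simp
    also have "\<dots> \<le> C" using C by (simp add: dist_commute)
    finally have "dist (\<phi> ?k x0) x0 \<le> C + 2 * dist x0 (qq n)"
      using isometry_displacement_le[OF isometry_action, of ?k x0 "qq n"] g hq(1) by simp
    then show "?k \<in> carrier G \<and> dist (\<phi> ?k x0) x0 \<le> C + 2 * D"
      using qq_near[of n] g hq(1) by simp
  qed
  then have "finite ((\<lambda>h. inv h \<otimes> g \<otimes> h) ` range hh)"
    using finite_bounded_displacement finite_subset by blast
  ultimately show ?thesis
    using infinite_centralizer_if_finitely_many_conjugates[OF g] hq(1) by blast
qed

theorem bd_fixed_points_nonempty_iff_infinite_centralizer:
  assumes "CAT0_space TYPE('a)" "g \<in> carrier G"
  shows "bd_fixed_points (\<phi> g) \<noteq> {} \<longleftrightarrow> infinite (centralizer G g)"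
  using assms bd_fixed_points_if_infinite_centralizer infinite_centralizer_if_bd_fixed_points
  by blast

end

theorem corollary2:
  fixes G :: "('g, 'c) monoid_scheme"
    and \<phi> :: "'g \<Rightarrow> 'a::metric_space \<Rightarrow> 'a"
    and \<psi> :: "'g \<Rightarrow> 'b::metric_space \<Rightarrow> 'b"
  assumes "group G"
    and "CAT0_space TYPE('a)" and "proper_metric_space TYPE('a)"
    and "CAT0_space TYPE('b)" and "proper_metric_space TYPE('b)"
    and "geometric_action G \<phi>" and "geometric_action G \<psi>"
    and "g \<in> carrier G"
  shows "bd_fixed_points (\<phi> g) \<noteq> {} \<longleftrightarrow> bd_fixed_points (\<psi> g) \<noteq> {}"
proof -
  interpret X: geometric_group_action G \<phi> using assms(6,3) by unfold_locales
  interpret Y: geometric_group_action G \<psi> using assms(7,5) by unfold_locales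
  show ?thesis
    using X.bd_fixed_points_nonempty_iff_infinite_centralizer[OF assms(2,8)]
      Y.bd_fixed_points_nonempty_iff_infinite_centralizer[OF assms(4,8)] by simp
qed

end
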